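(* Any two countable metric spaces that satisfy the almost extension property are almost isometric.
   Context: For $\lambda>1$, an injection $f$ is $\lambda$-bi-Lipschitz if for all distinct $a,b$ in its domain $d(f(a),f(b))<\lambda d(a,b)$ and $d(a,b)<\lambda d(f(a),f(b))$. A metric space $X$ has the almost extension property if for every finite metric space $F=\{x_0,\dots,x_{n-1},x_n\}$ and every $\lambda>1$, every $\lambda$-bi-Lipschitz map $f:\{x_0,\dots,x_{n-1}\}\to X$ extends to a $\lambda$-bi-Lipschitz map $\hat f:F\to X$. Two metric spaces $X,Y$ are almost isometric if for every $\lambda>1$ there is a $\lambda$-bi-Lipschitz bijection from $X$ onto $Y$. *)

theory Defs
  imports "HOL-Analysis.Analysis"
begin

definition bilip :: "real \<Rightarrow> ('a \<Rightarrow> 'a \<Rightarrow> real) \<Rightarrow> ('b \<Rightarrow> 'b \<Rightarrow> real)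
    \<Rightarrow> 'a set \<Rightarrow> 'b set \<Rightarrow> ('a \<Rightarrow> 'b) \<Rightarrow> bool" where
  "bilip lam dA dB A B f \<longleftrightarrow>
     f ` A \<subseteq> B \<and> inj_on f A \<and>
     (\<forall>a\<in>A. \<forall>b\<in>A. a \<noteq> b \<longrightarrow>
        dB (f a) (f b) < lam * dA a b \<and> dA a b < lam * dB (f a) (f b))"

text \<open>A finite metric space F = {x_0,...,x_n} is represented,
  up to isometry, as a metric dF on the index set {0..n}; the partial map is defined on
  {0..<n} = {x_0,...,x_(n-1)}.\<close>
definition almost_extension_property :: "'a set \<Rightarrow> ('a \<Rightarrow> 'a \<Rightarrow> real) \<Rightarrow> bool" where
  "almost_extension_property X dX \<longleftrightarrow>
     (\<forall>(n::nat) (dF :: nat \<Rightarrow> nat \<Rightarrow> real) (lam::real) (f :: nat \<Rightarrow> 'a).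
        Metric_space {0..n} dF \<and> lam > 1 \<and> bilip lam dF dX {0..<n} X f \<longrightarrow>
        (\<exists>g. bilip lam dF dX {0..n} X g \<and> (\<forall>i<n. g i = f i)))"

definition almost_isometric :: "'a set \<Rightarrow> ('a \<Rightarrow> 'a \<Rightarrow> real) \<Rightarrow> 'b set \<Rightarrow> ('b \<Rightarrow> 'b \<Rightarrow> real) \<Rightarrow> bool" where
  "almost_isometric X dX Y dY \<longleftrightarrow>
     (\<forall>lam::real. lam > 1 \<longrightarrow> (\<exists>f. bilip lam dX dY X Y f \<and> bij_betw f X Y))"

end

theory Submission
  imports Defs
begin

(* Back and forth. Fix lam > 1 and call a finite relation between X and Y good if it is the graph
   of a lam-bi-Lipschitz injection. The almost extension property of Y extends a good relation to
   any further point of X; applied to the converse relation, that of X extends it to any further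
   point of Y. Alternately adding the k-th points of enumerations of X and Y gives an increasing
   chain of good relations whose union is the graph of a bijection X -> Y. This bijection is
   lam-bi-Lipschitz because the defining strict inequalities involve only two pairs at a time,
   and any two pairs already lie in a common stage of the chain. *)

lemma countable_back_and_forth:
  fixes good :: "('a \<times> 'b) set \<Rightarrow> bool"
  assumes "countable X" and "countable Y" and "X \<noteq> {}" and "Y \<noteq> {}" and "good {}"
    and extend_Domain: "\<And>P x. good P \<Longrightarrow> x \<in> X \<Longrightarrow> \<exists>Q. P \<subseteq> Q \<and> good Q \<and> x \<in> Domain Q"
    and extend_Range: "\<And>P y. good P \<Longrightarrow> y \<in> Y \<Longrightarrow> \<exists>Q. P \<subseteq> Q \<and> good Q \<and> y \<in> Range Q"
  shows "\<exists>C. incseq C \<and> (\<forall>k. good (C k)) \<and> X \<subseteq> Domain (\<Union>k. C k) \<and> Y \<subseteq> Range (\<Union>k. C k)"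
proof -
  define F where "F P x = (SOME Q. P \<subseteq> Q \<and> good Q \<and> x \<in> Domain Q)" for P x
  define B where "B P y = (SOME Q. P \<subseteq> Q \<and> good Q \<and> y \<in> Range Q)" for P y
  have F: "P \<subseteq> F P x \<and> good (F P x) \<and> x \<in> Domain (F P x)" if "good P" "x \<in> X" for P x
    unfolding F_def using someI_ex[OF extend_Domain[OF that]] .
  have B: "P \<subseteq> B P y \<and> good (B P y) \<and> y \<in> Range (B P y)" if "good P" "y \<in> Y" for P y
    unfolding B_def using someI_ex[OF extend_Range[OF that]] .
  define C where "C = rec_nat {} (\<lambda>k P. B (F P (from_nat_into X k)) (from_nat_into Y k))"
  have C_0: "C 0 = {}"
    by (simp add: C_def)
  have C_Suc: "C (Suc k) = B (F (C k) (from_nat_into X k)) (from_nat_into Y k)" for k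
    by (simp add: C_def)
  have step: "good (C (Suc k)) \<and> C k \<subseteq> C (Suc k) \<and>
      from_nat_into X k \<in> Domain (C (Suc k)) \<and> from_nat_into Y k \<in> Range (C (Suc k))"
    if "good (C k)" for k
  proof -
    let ?Q = "F (C k) (from_nat_into X k)"
    have Q: "C k \<subseteq> ?Q" "good ?Q" "from_nat_into X k \<in> Domain ?Q"
      using F[OF that from_nat_into[OF assms(3)]] by auto
    have "?Q \<subseteq> C (Suc k)" "good (C (Suc k))" "from_nat_into Y k \<in> Range (C (Suc k))"
      unfolding C_Suc using B[OF Q(2) from_nat_into[OF assms(4)]] by auto
    with Q show ?thesis
      by blast
  qed
  have good_C: "good (C k)" for k
    by (induction k) (use C_0 assms(5) step in auto)
  have "incseq C"
    using step[OF good_C] by (intro incseq_SucI) blast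
  moreover have cover: "from_nat_into X k \<in> Domain (\<Union>k. C k)" "from_nat_into Y k \<in> Range (\<Union>k. C k)"
    for k
    using step[OF good_C, of k] by blast+
  have "X \<subseteq> Domain (\<Union>k. C k)"
    using cover(1) from_nat_into_surj[OF assms(1)] by (metis subsetI)
  moreover have "Y \<subseteq> Range (\<Union>k. C k)"
    using cover(2) from_nat_into_surj[OF assms(2)] by (metis subsetI)
  ultimately show ?thesis
    using good_C by blast
qed

lemma Metric_space_pullback:
  assumes "Metric_space M d" and "inj_on a I" and "a ` I \<subseteq> M"
  shows "Metric_space I (\<lambda>i j. d (a i) (a j))"
proof
  interpret Metric_space M d by fact
  fix i j k
  show "0 \<le> d (a i) (a j)" by simp
  show "d (a i) (a j) = d (a j) (a i)" by (rule commute)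
  show "d (a i) (a j) = 0 \<longleftrightarrow> i = j" if "i \<in> I" "j \<in> I"
  proof -
    have "a i \<in> M" "a j \<in> M" using that assms(3) by auto
    then show ?thesis using inj_on_eq_iff[OF assms(2) that] by simp
  qed
  show "d (a i) (a k) \<le> d (a i) (a j) + d (a j) (a k)" if "i \<in> I" "j \<in> I" "k \<in> I"
    using that assms(3) by (intro triangle) auto
qed

lemma single_valued_graph:
  assumes "single_valued R"
  obtains f where "R = (\<lambda>a. (a, f a)) ` Domain R"
proof
  have "(a, b) \<in> R \<Longrightarrow> (SOME b. (a, b) \<in> R) = b" for a b
    using assms someI[of "\<lambda>b. (a, b) \<in> R" b] unfolding single_valued_def by blast
  then show "R = (\<lambda>a. (a, SOME b. (a, b) \<in> R)) ` Domain R"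
    by force
qed

lemma bilip_cong:
  assumes "\<And>x. x \<in> A \<Longrightarrow> f x = g x"
  shows "bilip lam dA dB A B f \<longleftrightarrow> bilip lam dA dB A B g"
  using assms inj_on_cong[of A f g] image_cong[of A A f g] unfolding bilip_def by auto

lemma bilip_pullback:
  assumes "inj_on a I"
  shows "bilip lam (\<lambda>i j. dA (a i) (a j)) dB I B (f \<circ> a) \<longleftrightarrow> bilip lam dA dB (a ` I) B f"
  using assms unfolding bilip_def image_comp[symmetric] Ball_image_comp
  by (auto simp: comp_inj_on_iff inj_on_eq_iff)

lemma almost_extension_property_nonempty:
  assumes "almost_extension_property X dX"
  shows "X \<noteq> {}"
proof -
  have "Metric_space {0..(0::nat)} (\<lambda>_ _. 0)"
    by unfold_locales auto
  moreover have "bilip 2 (\<lambda>_ _. 0) dX {0..<(0::nat)} X undefined"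
    unfolding bilip_def by auto
  moreover have "(1::real) < 2"
    by simp
  ultimately obtain g where "bilip 2 (\<lambda>_ _. 0) dX {0..(0::nat)} X g"
    using assms unfolding almost_extension_property_def by blast
  then have "g 0 \<in> X"
    unfolding bilip_def by auto
  then show ?thesis
    by auto
qed

lemma almost_extension_property_extend:
  assumes "almost_extension_property Y dY" and "Metric_space X dX" and "lam > 1"
    and "finite A" and "A \<subseteq> X" and "x \<in> X" and "x \<notin> A"
    and f: "bilip lam dX dY A Y f"
  shows "\<exists>y. bilip lam dX dY (insert x A) Y (f(x := y))"
proof -
  \<comment> \<open>The property speaks about metrics on index sets {0..n}: enumerate A by the indices
    below n and let the index n stand for x.\<close>
  define n where "n = card A"
  obtain e where e: "bij_betw e {0..<n} A"
    using ex_bij_betw_nat_finite[OF \<open>finite A\<close>] n_def by blast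
  define a where "a = e(n := x)"
  have a_n: "a n = x"
    by (simp add: a_def)
  have a_below: "a ` {0..<n} = A"
    using e by (simp add: a_def bij_betw_def)
  have inj_below: "inj_on a {0..<n}"
    using e inj_on_cong[of "{0..<n}" a e] by (simp add: a_def bij_betw_def)
  have atMost_n: "{0..n} = insert n {0..<n}"
    by auto
  have a_upto: "a ` {0..n} = insert x A"
    unfolding atMost_n image_insert a_below a_n ..
  have inj_a: "inj_on a {0..n}"
    unfolding atMost_n inj_on_insert using inj_below \<open>x \<notin> A\<close> a_below a_n by simp
  define dF where "dF = (\<lambda>i j. dX (a i) (a j))"
  have "Metric_space {0..n} dF"
    unfolding dF_def using assms(5,6) a_upto by (intro Metric_space_pullback[OF assms(2) inj_a]) simp
  moreover have "bilip lam dF dY {0..<n} Y (f \<circ> a)"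
    using f unfolding dF_def bilip_pullback[OF inj_below] a_below .
  ultimately have "\<exists>g. bilip lam dF dY {0..n} Y g \<and> (\<forall>i<n. g i = (f \<circ> a) i)"
    using assms(1,3) unfolding almost_extension_property_def by blast
  then obtain g where g: "bilip lam dF dY {0..n} Y g" and gf: "\<forall>i<n. g i = f (a i)"
    by auto
  have "g i = (f(x := g n) \<circ> a) i" if "i \<in> {0..n}" for i
  proof (cases "i = n")
    case False
    then have "a i \<in> A" using that a_below by auto
    then show ?thesis using False that gf \<open>x \<notin> A\<close> by auto
  qed (simp add: a_n)
  then have "bilip lam dF dY {0..n} Y (f(x := g n) \<circ> a)"
    using g bilip_cong by blast
  then have "bilip lam dX dY (insert x A) Y (f(x := g n))"
    unfolding dF_def bilip_pullback[OF inj_a] a_upto .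
  then show ?thesis ..
qed

definition bilip_rel :: "real \<Rightarrow> ('a \<Rightarrow> 'a \<Rightarrow> real) \<Rightarrow> ('b \<Rightarrow> 'b \<Rightarrow> real)
    \<Rightarrow> 'a set \<Rightarrow> 'b set \<Rightarrow> ('a \<times> 'b) set \<Rightarrow> bool" where
  "bilip_rel lam dX dY X Y R \<longleftrightarrow> R \<subseteq> X \<times> Y \<and>
     (\<forall>a b a' b'. (a, b) \<in> R \<longrightarrow> (a', b') \<in> R \<longrightarrow> (a = a' \<longleftrightarrow> b = b') \<and>
        (a \<noteq> a' \<longrightarrow> dY b b' < lam * dX a a' \<and> dX a a' < lam * dY b b'))"

lemma bilip_rel_converse:
  "bilip_rel lam dX dY X Y R \<Longrightarrow> bilip_rel lam dY dX Y X (R\<inverse>)"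
  unfolding bilip_rel_def by blast

lemma bilip_rel_single_valued:
  "bilip_rel lam dX dY X Y R \<Longrightarrow> single_valued R"
  unfolding bilip_rel_def single_valued_def by blast

lemma bilip_rel_Union_incseq:
  assumes "incseq C" and C: "\<And>k. bilip_rel lam dX dY X Y (C k)"
  shows "bilip_rel lam dX dY X Y (\<Union>k. C k)"
  unfolding bilip_rel_def
proof (intro conjI allI impI)
  show "(\<Union>k. C k) \<subseteq> X \<times> Y"
    using C unfolding bilip_rel_def by blast
  fix a b a' b' assume "(a, b) \<in> (\<Union>k. C k)" "(a', b') \<in> (\<Union>k. C k)"
  then obtain k m where "(a, b) \<in> C k" "(a', b') \<in> C m"
    by blast
  moreover have "C k \<subseteq> C (max k m)" "C m \<subseteq> C (max k m)"
    using incseqD[OF \<open>incseq C\<close>] by simp_all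
  ultimately have "(a, b) \<in> C (max k m)" "(a', b') \<in> C (max k m)"
    by blast+
  then show "a = a' \<longleftrightarrow> b = b'" "a \<noteq> a' \<Longrightarrow> dY b b' < lam * dX a a'"
    "a \<noteq> a' \<Longrightarrow> dX a a' < lam * dY b b'"
    using C[of "max k m"] unfolding bilip_rel_def by blast+
qed

lemma bilip_rel_graph_iff:
  "bilip_rel lam dX dY X Y ((\<lambda>a. (a, f a)) ` A) \<longleftrightarrow> A \<subseteq> X \<and> bilip lam dX dY A Y f"
proof -
  have mem: "(a, b) \<in> (\<lambda>a. (a, f a)) ` A \<longleftrightarrow> a \<in> A \<and> b = f a" for a b
    by auto
  show ?thesis
    unfolding bilip_rel_def bilip_def inj_on_def mem by (auto simp: image_subset_iff)
qed

lemma bilip_rel_extend_Domain: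
  assumes "almost_extension_property Y dY" and "Metric_space X dX" and "lam > 1"
    and "finite P" and P: "bilip_rel lam dX dY X Y P" and "x \<in> X"
  shows "\<exists>Q. P \<subseteq> Q \<and> finite Q \<and> bilip_rel lam dX dY X Y Q \<and> x \<in> Domain Q"
proof (cases "x \<in> Domain P")
  case False
  obtain f where graph: "P = (\<lambda>a. (a, f a)) ` Domain P"
    using single_valued_graph bilip_rel_single_valued[OF P] by blast
  then have "Domain P \<subseteq> X" and "bilip lam dX dY (Domain P) Y f"
    using P bilip_rel_graph_iff by metis+
  then obtain y where y: "bilip lam dX dY (insert x (Domain P)) Y (f(x := y))"
    using almost_extension_property_extend[OF assms(1-3) finite_Domain[OF \<open>finite P\<close>]]
      \<open>x \<in> X\<close> False by blast
  define Q where "Q = (\<lambda>a. (a, (f(x := y)) a)) ` insert x (Domain P)"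
  have "P \<subseteq> Q"
    using graph False unfolding Q_def by force
  moreover have "bilip_rel lam dX dY X Y Q"
    unfolding Q_def bilip_rel_graph_iff using y \<open>Domain P \<subseteq> X\<close> \<open>x \<in> X\<close> by blast
  moreover have "finite Q" and "x \<in> Domain Q"
    using \<open>finite P\<close> unfolding Q_def by (auto simp: finite_Domain)
  ultimately show ?thesis by blast
qed (use assms in blast)

lemma bilip_rel_extend_Range:
  assumes "almost_extension_property X dX" and "Metric_space Y dY" and "lam > 1"
    and "finite P" and "bilip_rel lam dX dY X Y P" and "y \<in> Y"
  shows "\<exists>Q. P \<subseteq> Q \<and> finite Q \<and> bilip_rel lam dX dY X Y Q \<and> y \<in> Range Q"
proof -
  have "finite (P\<inverse>)" and "bilip_rel lam dY dX Y X (P\<inverse>)"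
    using assms(4,5) bilip_rel_converse by auto
  then obtain Q where Q: "P\<inverse> \<subseteq> Q" "finite Q" "bilip_rel lam dY dX Y X Q" "y \<in> Domain Q"
    using bilip_rel_extend_Domain[OF assms(1-3)] \<open>y \<in> Y\<close> by blast
  then have "P \<subseteq> Q\<inverse>" "finite (Q\<inverse>)" "bilip_rel lam dX dY X Y (Q\<inverse>)" "y \<in> Range (Q\<inverse>)"
    using bilip_rel_converse[of lam dY dX Y X Q] by auto
  then show ?thesis
    by blast
qed

lemma bilip_rel_bij_betw:
  assumes R: "bilip_rel lam dX dY X Y R" and "X \<subseteq> Domain R" and "Y \<subseteq> Range R"
  shows "\<exists>h. bilip lam dX dY X Y h \<and> bij_betw h X Y"
proof -
  obtain h where graph: "R = (\<lambda>a. (a, h a)) ` Domain R"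
    using single_valued_graph bilip_rel_single_valued[OF R] by blast
  have "Domain R = X"
    using R \<open>X \<subseteq> Domain R\<close> unfolding bilip_rel_def by blast
  then have R_h: "R = (\<lambda>a. (a, h a)) ` X"
    by (subst graph) simp
  then have h: "bilip lam dX dY X Y h"
    using R by (simp add: bilip_rel_graph_iff)
  have "Range R = h ` X"
    unfolding R_h by force
  moreover have "h ` X \<subseteq> Y" and "inj_on h X"
    using h by (simp_all add: bilip_def)
  ultimately have "bij_betw h X Y"
    using \<open>Y \<subseteq> Range R\<close> unfolding bij_betw_def by auto
  with h show ?thesis
    by blast
qed

theorem fact3p5:
  fixes X :: "'a set" and dX :: "'a \<Rightarrow> 'a \<Rightarrow> real"
    and Y :: "'b set" and dY :: "'b \<Rightarrow> 'b \<Rightarrow> real"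
  assumes "Metric_space X dX" and "Metric_space Y dY"
    and "countable X" and "countable Y"
    and "almost_extension_property X dX" and "almost_extension_property Y dY"
  shows "almost_isometric X dX Y dY"
  unfolding almost_isometric_def
proof (intro allI impI)
  fix lam :: real
  assume "lam > 1"
  let ?good = "\<lambda>P. finite P \<and> bilip_rel lam dX dY X Y P"
  have "\<exists>C. incseq C \<and> (\<forall>k. ?good (C k)) \<and> X \<subseteq> Domain (\<Union>k. C k) \<and> Y \<subseteq> Range (\<Union>k. C k)"
  proof (rule countable_back_and_forth)
    show "X \<noteq> {}" "Y \<noteq> {}"
      using assms(5,6) by (simp_all add: almost_extension_property_nonempty)
    show "?good {}"
      by (simp add: bilip_rel_def)
    show "\<exists>Q. P \<subseteq> Q \<and> ?good Q \<and> x \<in> Domain Q" if "?good P" "x \<in> X" for P x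
      using bilip_rel_extend_Domain[OF assms(6,1) \<open>lam > 1\<close>, of P x] that by (simp add: conj_assoc)
    show "\<exists>Q. P \<subseteq> Q \<and> ?good Q \<and> y \<in> Range Q" if "?good P" "y \<in> Y" for P y
      using bilip_rel_extend_Range[OF assms(5,2) \<open>lam > 1\<close>, of P y] that by (simp add: conj_assoc)
  qed (fact assms(3,4))+
  then obtain C where "incseq C" and good: "\<And>k. ?good (C k)"
    and "X \<subseteq> Domain (\<Union>k. C k)" and "Y \<subseteq> Range (\<Union>k. C k)"
    by blast
  have "bilip_rel lam dX dY X Y (\<Union>k. C k)"
    using \<open>incseq C\<close> good by (simp add: bilip_rel_Union_incseq)
  then show "\<exists>f. bilip lam dX dY X Y f \<and> bij_betw f X Y"
    using \<open>X \<subseteq> Domain (\<Union>k. C k)\<close> \<open>Y \<subseteq> Range (\<Union>k. C k)\<close> by (rule bilip_rel_bij_betw)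
qed

end
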